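(* Let $G=(V,E)$ be a simple graph with $V=\{1,\dots,n\}$, adjacency matrix $A$, and let $w\in\mathbb{R}^n$ with $w\geq 0$. Then $$\alpha_w(G)=\max\{w^\top x \mid x \text{ solves } \mathrm{LCP}(A+I,-\mathbf{e})\},$$ where $I$ is the $n\times n$ identity matrix and $\mathbf{e}$ is the all-ones vector in $\mathbb{R}^n$.
   Context: A simple graph is a finite undirected graph without self-loops or multiple edges; its adjacency matrix $A=[a_{ij}]$ has $a_{ij}=1$ if $\{i,j\}\in E$ and $0$ otherwise. An independent set is a set of pairwise non-adjacent vertices. For a weight vector $w$, $\alpha_w(G):=\max\{\sum_{i\in S}w_i \mid S\subseteq V \text{ independent}\}$. For $M\in\mathbb{R}^{n\times n}$, $q\in\mathbb{R}^n$, a vector $x\in\mathbb{R}^n$ solves the linear complementarity problem $\mathrm{LCP}(M,q)$ if $x\geq 0$, $Mx+q\geq 0$ and $x^\top(Mx+q)=0$. *)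

theory Defs
  imports Main "HOL-Analysis.Analysis"
begin

text \<open>Vectors in R^n are functions nat => real, only their values on {1..n} matter;
  n x n matrices are functions nat => nat => real indexed on {1..n}.\<close>

definition simple_graph :: "nat \<Rightarrow> (nat \<Rightarrow> nat \<Rightarrow> bool) \<Rightarrow> bool" where
  "simple_graph n E \<longleftrightarrow>
     (\<forall>i j. E i j \<longrightarrow> i \<in> {1..n} \<and> j \<in> {1..n}) \<and>
     (\<forall>i j. E i j \<longrightarrow> E j i) \<and> (\<forall>i. \<not> E i i)"

definition adj_matrix :: "(nat \<Rightarrow> nat \<Rightarrow> bool) \<Rightarrow> nat \<Rightarrow> nat \<Rightarrow> real" where
  "adj_matrix E i j = (if E i j then 1 else 0)"

definition id_matrix :: "nat \<Rightarrow> nat \<Rightarrow> real" where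
  "id_matrix i j = (if i = j then 1 else 0)"

definition independent_set :: "nat \<Rightarrow> (nat \<Rightarrow> nat \<Rightarrow> bool) \<Rightarrow> nat set \<Rightarrow> bool" where
  "independent_set n E S \<longleftrightarrow> S \<subseteq> {1..n} \<and> (\<forall>i\<in>S. \<forall>j\<in>S. \<not> E i j)"

definition alpha_w :: "nat \<Rightarrow> (nat \<Rightarrow> nat \<Rightarrow> bool) \<Rightarrow> (nat \<Rightarrow> real) \<Rightarrow> real" where
  "alpha_w n E w = Max {(\<Sum>i\<in>S. w i) | S. independent_set n E S}"

definition mat_vec :: "nat \<Rightarrow> (nat \<Rightarrow> nat \<Rightarrow> real) \<Rightarrow> (nat \<Rightarrow> real) \<Rightarrow> nat \<Rightarrow> real" where
  "mat_vec n M x i = (\<Sum>j=1..n. M i j * x j)"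

definition solves_LCP :: "nat \<Rightarrow> (nat \<Rightarrow> nat \<Rightarrow> real) \<Rightarrow> (nat \<Rightarrow> real) \<Rightarrow> (nat \<Rightarrow> real) \<Rightarrow> bool" where
  "solves_LCP n M q x \<longleftrightarrow>
     (\<forall>i\<in>{1..n}. x i \<ge> 0) \<and>
     (\<forall>i\<in>{1..n}. mat_vec n M x i + q i \<ge> 0) \<and>
     (\<Sum>i=1..n. x i * (mat_vec n M x i + q i)) = 0"

end

theory Submission imports Defs begin

text \<open>
  For the characteristic vector x of an independent set I, \<open>((A+I)x)\<^sub>i\<close> counts the vertices of I
  in the closed neighbourhood \<open>N[i]\<close>, so x solves LCP(A+I,-e) whenever I is maximal;
  extending a maximum weight independent set to a maximal one gives a solution attaining
  \<open>\<alpha>\<^sub>w(G)\<close>. Conversely, complementarity forces \<open>((A+I)x)\<^sub>i = 1\<close> on the support S of a solution x,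
  so \<open>w\<^sup>T x = f(S)\<close> with \<open>f(T) = \<Sum>\<^sub>i\<^sub>\<in>\<^sub>T w\<^sub>i x\<^sub>i / x(N[i] \<inter> T)\<close>. This weighted Caro-Wei bound is at
  most the weight of an independent subset of T: averaging with weights \<open>x\<^sub>v\<close> shows
  \<open>w\<^sub>v + f(T - N[v]) \<ge> f(T)\<close> for some \<open>v \<in> T\<close>, and one recurses on \<open>T - N[v]\<close>.
\<close>

definition closed_nbhd :: "(nat \<Rightarrow> nat \<Rightarrow> bool) \<Rightarrow> nat \<Rightarrow> nat set" where
  "closed_nbhd E i = {j. E i j \<or> j = i}"

definition nbhd_weight :: "(nat \<Rightarrow> nat \<Rightarrow> bool) \<Rightarrow> (nat \<Rightarrow> real) \<Rightarrow> nat set \<Rightarrow> nat \<Rightarrow> real" where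
  "nbhd_weight E x T i = (\<Sum>j\<in>T \<inter> closed_nbhd E i. x j)"

definition caro_wei_bound ::
    "(nat \<Rightarrow> nat \<Rightarrow> bool) \<Rightarrow> (nat \<Rightarrow> real) \<Rightarrow> (nat \<Rightarrow> real) \<Rightarrow> nat set \<Rightarrow> real" where
  "caro_wei_bound E x w T = (\<Sum>i\<in>T. w i * x i / nbhd_weight E x T i)"

definition maximal_independent_set :: "nat \<Rightarrow> (nat \<Rightarrow> nat \<Rightarrow> bool) \<Rightarrow> nat set \<Rightarrow> bool" where
  "maximal_independent_set n E I \<longleftrightarrow>
     independent_set n E I \<and> (\<forall>i\<in>{1..n} - I. \<exists>j\<in>I. E i j)"

lemma closed_nbhd_sym:
  assumes "\<forall>i j. E i j \<longrightarrow> E j i"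
  shows "i \<in> closed_nbhd E j \<longleftrightarrow> j \<in> closed_nbhd E i"
  using assms unfolding closed_nbhd_def by auto

lemma nbhd_weight_ge_self:
  assumes "finite T" "i \<in> T" "\<forall>j\<in>T. x j \<ge> 0"
  shows "x i \<le> nbhd_weight E x T i"
  unfolding nbhd_weight_def using assms
  by (intro member_le_sum) (auto simp: closed_nbhd_def)

lemma nbhd_weight_mono:
  assumes "finite T" "U \<subseteq> T" "\<forall>j\<in>T. x j \<ge> 0"
  shows "nbhd_weight E x U i \<le> nbhd_weight E x T i"
  unfolding nbhd_weight_def using assms by (intro sum_mono2) auto

lemma caro_wei_bound_remove_nbhd:
  assumes fin: "finite S" and pos: "\<forall>j\<in>S. x j > 0" and wpos: "\<forall>j\<in>S. w j \<ge> 0"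
  shows "(\<Sum>i\<in>S - closed_nbhd E v. w i * x i / nbhd_weight E x S i)
           \<le> caro_wei_bound E x w (S - closed_nbhd E v)"
  unfolding caro_wei_bound_def
proof (intro sum_mono)
  fix i assume i: "i \<in> S - closed_nbhd E v"
  let ?T = "S - closed_nbhd E v"
  have nonneg: "\<forall>j\<in>S. x j \<ge> 0" using pos by (simp add: less_imp_le)
  have "x i \<le> nbhd_weight E x ?T i" "nbhd_weight E x ?T i \<le> nbhd_weight E x S i"
    using i fin nonneg by (auto intro!: nbhd_weight_ge_self nbhd_weight_mono)
  moreover have "x i > 0" "w i * x i \<ge> 0" using i pos wpos by auto
  ultimately show "w i * x i / nbhd_weight E x S i \<le> w i * x i / nbhd_weight E x ?T i"
    by (intro divide_left_mono) auto
qed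

text \<open>After swapping the double sum, each \<open>i \<in> S\<close> lies outside \<open>N[v]\<close> for vertices v of total
  x-weight \<open>\<Sum>x - nbhd_weight E x S i\<close>; this is where symmetry of E enters.\<close>

lemma caro_wei_averaging:
  assumes fin: "finite S" and pos: "\<forall>j\<in>S. x j > 0" and wpos: "\<forall>j\<in>S. w j \<ge> 0"
    and sym: "\<forall>i j. E i j \<longrightarrow> E j i"
  shows "(\<Sum>v\<in>S. x v) * caro_wei_bound E x w S
           \<le> (\<Sum>v\<in>S. x v * (w v + caro_wei_bound E x w (S - closed_nbhd E v)))"
proof -
  define X where "X = (\<Sum>v\<in>S. x v)"
  define c where "c i = w i * x i / nbhd_weight E x S i" for i
  have D_pos: "nbhd_weight E x S i > 0" if "i \<in> S" for i
    using nbhd_weight_ge_self[OF fin that, of x E] pos that by force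
  have outside: "(\<Sum>v\<in>S - closed_nbhd E i. x v) = X - nbhd_weight E x S i" for i
  proof -
    have "S - closed_nbhd E i = S - S \<inter> closed_nbhd E i" by blast
    thus ?thesis unfolding X_def nbhd_weight_def using fin by (simp add: sum_diff)
  qed
  have "X * caro_wei_bound E x w S = (\<Sum>i\<in>S. x i * w i + (X - nbhd_weight E x S i) * c i)"
    unfolding caro_wei_bound_def sum_distrib_left c_def
  proof (intro sum.cong refl)
    fix i assume "i \<in> S"
    hence "nbhd_weight E x S i \<noteq> 0" using D_pos by force
    thus "X * (w i * x i / nbhd_weight E x S i)
        = x i * w i + (X - nbhd_weight E x S i) * (w i * x i / nbhd_weight E x S i)"
      by (simp add: field_simps)
  qed
  also have "\<dots> = (\<Sum>i\<in>S. x i * w i) + (\<Sum>i\<in>S. \<Sum>v\<in>S - closed_nbhd E i. x v * c i)"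
    by (simp add: sum.distrib flip: outside sum_distrib_right)
  also have "(\<Sum>i\<in>S. \<Sum>v\<in>S - closed_nbhd E i. x v * c i)
           = (\<Sum>v\<in>S. \<Sum>i\<in>S - closed_nbhd E v. x v * c i)"
  proof -
    have "(\<Sum>i\<in>S. \<Sum>v\<in>S - closed_nbhd E i. x v * c i)
        = (\<Sum>i\<in>S. \<Sum>v\<in>S. if i \<in> closed_nbhd E v then 0 else x v * c i)"
    proof -
      have "{v. i \<in> closed_nbhd E v} = closed_nbhd E i" for i
        using closed_nbhd_sym[OF sym] by blast
      thus ?thesis using fin by (simp add: sum.If_cases Diff_eq)
    qed
    also have "\<dots> = (\<Sum>v\<in>S. \<Sum>i\<in>S. if i \<in> closed_nbhd E v then 0 else x v * c i)"
      by (rule sum.swap)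
    also have "\<dots> = (\<Sum>v\<in>S. \<Sum>i\<in>S - closed_nbhd E v. x v * c i)"
      using fin by (simp add: sum.If_cases Diff_eq)
    finally show ?thesis .
  qed
  also have "\<dots> \<le> (\<Sum>v\<in>S. x v * caro_wei_bound E x w (S - closed_nbhd E v))"
    unfolding sum_distrib_left[symmetric] c_def using pos
    by (intro sum_mono mult_left_mono caro_wei_bound_remove_nbhd[OF fin pos wpos]) auto
  finally show ?thesis
    unfolding X_def by (simp add: distrib_left sum.distrib mult.commute)
qed

lemma caro_wei_independent_subset:
  assumes sym: "\<forall>i j. E i j \<longrightarrow> E j i" and irr: "\<forall>i. \<not> E i i"
    and "finite S" "\<forall>j\<in>S. x j > 0" "\<forall>j\<in>S. w j \<ge> 0"
  shows "\<exists>I\<subseteq>S. (\<forall>i\<in>I. \<forall>j\<in>I. \<not> E i j) \<and> caro_wei_bound E x w S \<le> (\<Sum>i\<in>I. w i)"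
  using assms(3-5)
proof (induction "card S" arbitrary: S rule: less_induct)
  case less
  show ?case
  proof (cases "S = {}")
    case True
    thus ?thesis by (simp add: caro_wei_bound_def)
  next
    case False
    let ?g = "\<lambda>v. w v + caro_wei_bound E x w (S - closed_nbhd E v)"
    have "\<exists>v\<in>S. caro_wei_bound E x w S \<le> ?g v"
    proof (rule ccontr)
      assume "\<not> ?thesis"
      hence "(\<Sum>v\<in>S. x v * ?g v) < (\<Sum>v\<in>S. x v * caro_wei_bound E x w S)"
        using less.prems False by (intro sum_strict_mono) (auto simp: not_le)
      thus False
        using caro_wei_averaging[OF less.prems sym] by (simp add: sum_distrib_right)
    qed
    then obtain v where v: "v \<in> S" "caro_wei_bound E x w S \<le> ?g v" ..
    let ?T = "S - closed_nbhd E v"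
    have "card ?T < card S"
      using v less.prems by (intro psubset_card_mono) (auto simp: closed_nbhd_def)
    then obtain I where I: "I \<subseteq> ?T" "\<forall>i\<in>I. \<forall>j\<in>I. \<not> E i j"
        "caro_wei_bound E x w ?T \<le> (\<Sum>i\<in>I. w i)"
      using less.hyps[of ?T] less.prems by auto
    have "finite I" "v \<notin> I" using I(1) less.prems(1) finite_subset by (auto simp: closed_nbhd_def)
    moreover have "\<forall>i\<in>insert v I. \<forall>j\<in>insert v I. \<not> E i j"
      using I(1,2) irr sym by (auto simp: closed_nbhd_def)
    ultimately show ?thesis
      using v I(1,3) by (intro exI[of _ "insert v I"]) auto
  qed
qed

lemma finite_independent_set_weights:
  "finite {(\<Sum>i\<in>S. w i) | S. independent_set n E S}"
proof -
  have "{(\<Sum>i\<in>S. w i) | S. independent_set n E S} \<subseteq> (\<lambda>S. \<Sum>i\<in>S. w i) ` Pow {1..n}"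
    unfolding independent_set_def by auto
  thus ?thesis by (rule finite_subset) simp
qed

lemma independent_set_weight_le_alpha_w:
  "independent_set n E S \<Longrightarrow> (\<Sum>i\<in>S. w i) \<le> alpha_w n E w"
  unfolding alpha_w_def using finite_independent_set_weights by (intro Max_ge) auto

lemma alpha_w_attained:
  "\<exists>S. independent_set n E S \<and> (\<Sum>i\<in>S. w i) = alpha_w n E w"
proof -
  have "{(\<Sum>i\<in>S. w i) | S. independent_set n E S} \<noteq> {}"
    using independent_set_def[of n E "{}"] by auto
  hence "alpha_w n E w \<in> {(\<Sum>i\<in>S. w i) | S. independent_set n E S}"
    unfolding alpha_w_def by (rule Max_in[OF finite_independent_set_weights])
  thus ?thesis by auto
qed

lemma independent_set_extends_to_maximal:
  assumes sym: "\<forall>i j. E i j \<longrightarrow> E j i" and irr: "\<forall>i. \<not> E i i"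
    and S: "independent_set n E S"
  obtains I where "maximal_independent_set n E I" "S \<subseteq> I"
proof -
  define F where "F = {I. independent_set n E I \<and> S \<subseteq> I}"
  have F_fin: "finite (card ` F)"
    unfolding F_def independent_set_def by (rule finite_subset[of _ "card ` Pow {1..n}"]) auto
  have "card ` F \<noteq> {}" using S unfolding F_def by auto
  hence "Max (card ` F) \<in> card ` F" by (rule Max_in[OF F_fin])
  then obtain I where I: "I \<in> F" "card I = Max (card ` F)" by (metis imageE)
  have I_max: "card J \<le> card I" if "J \<in> F" for J
    using I(2) F_fin that by simp
  have I_ind: "independent_set n E I" and "S \<subseteq> I" using I(1) unfolding F_def by auto
  hence I_sub: "I \<subseteq> {1..n}" and I_edges: "\<forall>i\<in>I. \<forall>j\<in>I. \<not> E i j"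
    unfolding independent_set_def by auto
  have "\<exists>j\<in>I. E i j" if i: "i \<in> {1..n} - I" for i
  proof (rule ccontr)
    assume "\<not> (\<exists>j\<in>I. E i j)"
    hence "independent_set n E (insert i I)"
      unfolding independent_set_def using I_sub I_edges i sym irr by blast
    hence "card (insert i I) \<le> card I" using I_max \<open>S \<subseteq> I\<close> unfolding F_def by blast
    moreover have "finite I" using I_sub finite_subset by blast
    ultimately show False using i by simp
  qed
  thus thesis
    using that I_ind \<open>S \<subseteq> I\<close> unfolding maximal_independent_set_def by blast
qed

lemma mat_vec_adj_plus_id:
  assumes "\<forall>i. \<not> E i i"
  shows "mat_vec n (\<lambda>i j. adj_matrix E i j + id_matrix i j) x i = nbhd_weight E x {1..n} i"
  unfolding mat_vec_def nbhd_weight_def adj_matrix_def id_matrix_def closed_nbhd_def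
    sum.inter_restrict[OF finite_atLeastAtMost]
  using assms by (intro sum.cong) auto

lemma maximal_independent_set_solves_LCP:
  assumes irr: "\<forall>i. \<not> E i i" and I: "maximal_independent_set n E I"
  shows "solves_LCP n (\<lambda>i j. adj_matrix E i j + id_matrix i j) (\<lambda>i. - 1)
           (\<lambda>i. if i \<in> I then 1 else 0)"
proof -
  define x :: "nat \<Rightarrow> real" where "x i = (if i \<in> I then 1 else 0)" for i
  have I_sub: "I \<subseteq> {1..n}" and I_ind: "\<forall>i\<in>I. \<forall>j\<in>I. \<not> E i j"
    using I unfolding maximal_independent_set_def independent_set_def by auto
  have dominating: "\<forall>i\<in>{1..n} - I. \<exists>j\<in>I. E i j"
    using I unfolding maximal_independent_set_def by simp
  have weight: "nbhd_weight E x {1..n} i = card ({1..n} \<inter> closed_nbhd E i \<inter> I)" for i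
    unfolding nbhd_weight_def x_def by (simp add: sum.inter_restrict[symmetric])
  have on_I: "nbhd_weight E x {1..n} i = 1" if "i \<in> I" for i
  proof -
    have "{1..n} \<inter> closed_nbhd E i \<inter> I = {i}"
      using that I_sub I_ind unfolding closed_nbhd_def by blast
    thus ?thesis unfolding weight by simp
  qed
  have off_I: "1 \<le> nbhd_weight E x {1..n} i" if i: "i \<in> {1..n} - I" for i
  proof -
    obtain j where "j \<in> I" "E i j"
      using dominating i by blast
    hence "j \<in> {1..n} \<inter> closed_nbhd E i \<inter> I" using I_sub unfolding closed_nbhd_def by auto
    hence "card ({1..n} \<inter> closed_nbhd E i \<inter> I) > 0" by (auto simp: card_gt_0_iff)
    thus ?thesis unfolding weight by simp
  qed
  have "solves_LCP n (\<lambda>i j. adj_matrix E i j + id_matrix i j) (\<lambda>i. - 1) x"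
    unfolding solves_LCP_def mat_vec_adj_plus_id[where E = E, OF irr]
  proof (intro conjI ballI)
    fix i assume i: "i \<in> {1..n}"
    show "0 \<le> x i" by (simp add: x_def)
    show "0 \<le> nbhd_weight E x {1..n} i + - 1"
      using on_I[of i] off_I[of i] i by (cases "i \<in> I") auto
  next
    show "(\<Sum>i=1..n. x i * (nbhd_weight E x {1..n} i + - 1)) = 0"
      using on_I by (intro sum.neutral) (simp add: x_def)
  qed
  thus ?thesis unfolding x_def .
qed

lemma LCP_solution_nbhd_weight_support:
  assumes irr: "\<forall>i. \<not> E i i"
    and sol: "solves_LCP n (\<lambda>i j. adj_matrix E i j + id_matrix i j) (\<lambda>i. - 1) x"
    and i: "i \<in> {1..n}" "x i > 0"
  shows "nbhd_weight E x {j\<in>{1..n}. x j > 0} i = 1"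
proof -
  let ?y = "\<lambda>i. nbhd_weight E x {1..n} i - 1"
  have x_nonneg: "\<forall>j\<in>{1..n}. x j \<ge> 0" and y_nonneg: "\<forall>j\<in>{1..n}. ?y j \<ge> 0"
    and compl: "(\<Sum>j=1..n. x j * ?y j) = 0"
    using sol unfolding solves_LCP_def mat_vec_adj_plus_id[where E = E, OF irr] by auto
  have "\<forall>j\<in>{1..n}. x j * ?y j \<ge> 0" using x_nonneg y_nonneg by simp
  hence "\<forall>j\<in>{1..n}. x j * ?y j = 0"
    using compl sum_nonneg_eq_0_iff[of "{1..n}" "\<lambda>j. x j * ?y j"] by simp
  hence "x i * ?y i = 0" using i(1) by blast
  hence "nbhd_weight E x {1..n} i = 1" using i(2) by simp
  moreover have "x j > 0" if "j \<in> {1..n}" "x j \<noteq> 0" for j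
    using x_nonneg that by force
  hence "nbhd_weight E x {j\<in>{1..n}. x j > 0} i = nbhd_weight E x {1..n} i"
    unfolding nbhd_weight_def by (intro sum.mono_neutral_left) auto
  ultimately show ?thesis by simp
qed

lemma LCP_solution_weight_le_alpha_w:
  assumes sym: "\<forall>i j. E i j \<longrightarrow> E j i" and irr: "\<forall>i. \<not> E i i"
    and w: "\<forall>i\<in>{1..n}. w i \<ge> 0"
    and sol: "solves_LCP n (\<lambda>i j. adj_matrix E i j + id_matrix i j) (\<lambda>i. - 1) x"
  shows "(\<Sum>i=1..n. w i * x i) \<le> alpha_w n E w"
proof -
  define S where "S = {i\<in>{1..n}. x i > 0}"
  have S_sub: "S \<subseteq> {1..n}" and "finite S" and S_pos: "\<forall>j\<in>S. x j > 0"
    unfolding S_def by auto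
  have "\<forall>i\<in>{1..n}. x i \<ge> 0" using sol unfolding solves_LCP_def by blast
  hence zero: "x i = 0" if "i \<in> {1..n}" "\<not> x i > 0" for i
    using that by force
  have w_S: "\<forall>j\<in>S. w j \<ge> 0" using w S_sub by blast
  obtain I where I: "I \<subseteq> S" "\<forall>i\<in>I. \<forall>j\<in>I. \<not> E i j"
      "caro_wei_bound E x w S \<le> (\<Sum>i\<in>I. w i)"
    using caro_wei_independent_subset[OF sym irr \<open>finite S\<close> S_pos w_S] by blast
  have "(\<Sum>i=1..n. w i * x i) = (\<Sum>i\<in>S. w i * x i)"
    unfolding S_def by (intro sum.mono_neutral_right) (auto simp: zero)
  also have "\<dots> = caro_wei_bound E x w S"
    unfolding caro_wei_bound_def S_def
    using LCP_solution_nbhd_weight_support[OF irr sol] by (intro sum.cong) auto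
  also have "\<dots> \<le> (\<Sum>i\<in>I. w i)" by (rule I(3))
  also have "\<dots> \<le> alpha_w n E w"
    using I(1,2) S_sub by (intro independent_set_weight_le_alpha_w) (auto simp: independent_set_def)
  finally show ?thesis .
qed

theorem theorem1:
  fixes n :: nat and E :: "nat \<Rightarrow> nat \<Rightarrow> bool" and w :: "nat \<Rightarrow> real"
  assumes "simple_graph n E"
    and "\<forall>i\<in>{1..n}. w i \<ge> 0"
  shows "(\<exists>x. solves_LCP n (\<lambda>i j. adj_matrix E i j + id_matrix i j) (\<lambda>i. - 1) x
              \<and> (\<Sum>i=1..n. w i * x i) = alpha_w n E w)
       \<and> (\<forall>x. solves_LCP n (\<lambda>i j. adj_matrix E i j + id_matrix i j) (\<lambda>i. - 1) x
              \<longrightarrow> (\<Sum>i=1..n. w i * x i) \<le> alpha_w n E w)"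
proof -
  have sym: "\<forall>i j. E i j \<longrightarrow> E j i" and irr: "\<forall>i. \<not> E i i"
    using assms(1) unfolding simple_graph_def by auto
  have upper: "\<forall>x. solves_LCP n (\<lambda>i j. adj_matrix E i j + id_matrix i j) (\<lambda>i. - 1) x
                 \<longrightarrow> (\<Sum>i=1..n. w i * x i) \<le> alpha_w n E w"
    by (intro allI impI LCP_solution_weight_le_alpha_w[OF sym irr assms(2)])
  obtain S where S: "independent_set n E S" "(\<Sum>i\<in>S. w i) = alpha_w n E w"
    using alpha_w_attained[of n E w] by blast
  obtain I where I: "maximal_independent_set n E I" "S \<subseteq> I"
    using independent_set_extends_to_maximal[OF sym irr S(1)] .
  define x :: "nat \<Rightarrow> real" where "x i = (if i \<in> I then 1 else 0)" for i
  have sol: "solves_LCP n (\<lambda>i j. adj_matrix E i j + id_matrix i j) (\<lambda>i. - 1) x"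
    unfolding x_def using maximal_independent_set_solves_LCP[OF irr I(1)] .
  have "I \<subseteq> {1..n}" using I(1) unfolding maximal_independent_set_def independent_set_def by auto
  hence "(\<Sum>i=1..n. w i * x i) = (\<Sum>i\<in>I. w i)"
    unfolding x_def by (simp add: sum.inter_restrict[symmetric] if_distrib Int_absorb1 cong: if_cong)
  moreover have "alpha_w n E w \<le> (\<Sum>i\<in>I. w i)"
    unfolding S(2)[symmetric] using I(2) \<open>I \<subseteq> {1..n}\<close> assms(2)
    by (intro sum_mono2 finite_subset[OF \<open>I \<subseteq> {1..n}\<close>]) auto
  moreover have "(\<Sum>i=1..n. w i * x i) \<le> alpha_w n E w" using upper sol by blast
  ultimately have attained: "(\<Sum>i=1..n. w i * x i) = alpha_w n E w" by linarith
  show ?thesis using sol attained upper by blast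
qed

end
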